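(* Let $\mathbf{x}\in\mathcal{P}$, and let the quantities $\tilde x_{v,s,t}$, $r_{v,s,t}$, $J_{v,t}$ be computed by the SN dynamic programs using $\mathbf{x}$ as the ex ante solution. Then for every volunteer $v\in[V]$, $J_{v,1}\ge\frac{1}{2-q}f_v(\mathbf{x})$, where $q$ is the minimum discrete hazard rate of $g$.
   Context: Data: volunteers $[V]$, task types $[S]$, horizon $T$, $\lambda_{s,t}\ge0$ with $\sum_{s=1}^S\lambda_{s,t}\le1$ and $\lambda_{0,t}=1-\sum_{s=1}^S\lambda_{s,t}$, $p_{v,s}\in[0,1]$, a probability mass function $g$ on the positive integers with CDF $G(\tau)=\sum_{i\le\tau}g(i)$, $G(0)=0$. MDHR: $q=\min_{\tau\in\mathbb{N}}\frac{g(\tau)}{1-G(\tau-1)}$ (with $\frac00:=1$). $\mathcal{P}$: set of $\mathbf{x}\in\mathbb{R}^{V\times S\times T}$ with $0\le x_{v,s,t}\le1$ and $\sum_{\tau=1}^t\sum_{s=1}^S\lambda_{s,\tau}x_{v,s,\tau}(1-G(t-\tau))\le1$ for all $v,t$. $f_v(\mathbf{x})=\sum_{t=1}^T\sum_{s=1}^S\lambda_{s,t}\big(\prod_{u<v}(1-p_{u,s}x_{u,s,t})\big)p_{v,s}x_{v,s,t}$. SN dynamic programs with ex ante solution $\mathbf{x}$: for $v=1,\dots,V$ in order: $r_{v,s,t}=p_{v,s}\prod_{u=1}^{v-1}(1-\tilde x_{u,s,t}p_{u,s})$; $J_{v,T+1}=0$; for $t=T$ down to $1$: $\tilde x_{v,s,t}=x_{v,s,t}\,\mathbb{I}\{r_{v,s,t}+\sum_{\tau=t+1}^Tg(\tau-t)J_{v,\tau}\ge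 J_{v,t+1}\}$ for $s\in[S]$ (with $\tilde x_{v,0,t}=r_{v,0,t}=0$), and $J_{v,t}=\sum_{s=0}^S\lambda_{s,t}\big((1-\tilde x_{v,s,t})J_{v,t+1}+\tilde x_{v,s,t}(r_{v,s,t}+\sum_{\tau=t+1}^Tg(\tau-t)J_{v,\tau})\big)$. *)

theory Defs
  imports Complex_Main
begin

text \<open>Conventions: volunteers are 1..V, task types 1..S, periods 1..T.
  lam s t = \<lambda>_{s,t}, p v s = p_{v,s}, x v s t = x_{v,s,t}, g i = g(i).\<close>

definition Gcdf :: "(nat \<Rightarrow> real) \<Rightarrow> nat \<Rightarrow> real" where
  "Gcdf g \<tau> = (\<Sum>i=1..\<tau>. g i)"

definition hazard :: "(nat \<Rightarrow> real) \<Rightarrow> nat \<Rightarrow> real" where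
  "hazard g \<tau> = (if g \<tau> = 0 \<and> 1 - Gcdf g (\<tau> - 1) = 0 then 1
                 else g \<tau> / (1 - Gcdf g (\<tau> - 1)))"

definition mdhr :: "(nat \<Rightarrow> real) \<Rightarrow> real" where
  "mdhr g = (INF \<tau>\<in>{1..}. hazard g \<tau>)"

definition in_polytope ::
  "nat \<Rightarrow> nat \<Rightarrow> nat \<Rightarrow> (nat \<Rightarrow> nat \<Rightarrow> real) \<Rightarrow> (nat \<Rightarrow> real) \<Rightarrow> (nat \<Rightarrow> nat \<Rightarrow> nat \<Rightarrow> real) \<Rightarrow> bool" where
  "in_polytope V S T lam g x \<longleftrightarrow>
     (\<forall>v\<in>{1..V}. \<forall>s\<in>{1..S}. \<forall>t\<in>{1..T}. 0 \<le> x v s t \<and> x v s t \<le> 1) \<and>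
     (\<forall>v\<in>{1..V}. \<forall>t\<in>{1..T}.
        (\<Sum>\<tau>=1..t. \<Sum>s=1..S. lam s \<tau> * x v s \<tau> * (1 - Gcdf g (t - \<tau>))) \<le> 1)"

definition f_obj ::
  "nat \<Rightarrow> nat \<Rightarrow> (nat \<Rightarrow> nat \<Rightarrow> real) \<Rightarrow> (nat \<Rightarrow> nat \<Rightarrow> real) \<Rightarrow> (nat \<Rightarrow> nat \<Rightarrow> nat \<Rightarrow> real) \<Rightarrow> nat \<Rightarrow> real" where
  "f_obj S T lam p x v = (\<Sum>t=1..T. \<Sum>s=1..S.
      lam s t * (\<Prod>u=1..<v. (1 - p u s * x u s t)) * p v s * x v s t)"

text \<open>One step of the backward recursion for a single volunteer, given the
  volunteer's ex ante values xv s t, the rewards r s t, and the already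
  computed values J \<tau> for \<tau> > t.\<close>
definition SN_cont :: "nat \<Rightarrow> (nat \<Rightarrow> real) \<Rightarrow> (nat \<Rightarrow> nat \<Rightarrow> real) \<Rightarrow> (nat \<Rightarrow> real) \<Rightarrow> nat \<Rightarrow> nat \<Rightarrow> real" where
  "SN_cont T g r J s t = r s t + (\<Sum>\<tau>=t+1..T. g (\<tau> - t) * J \<tau>)"

definition SN_xt :: "nat \<Rightarrow> (nat \<Rightarrow> real) \<Rightarrow> (nat \<Rightarrow> nat \<Rightarrow> real) \<Rightarrow> (nat \<Rightarrow> nat \<Rightarrow> real) \<Rightarrow> (nat \<Rightarrow> real) \<Rightarrow> nat \<Rightarrow> nat \<Rightarrow> real" where
  "SN_xt T g xv r J s t = xv s t * (if SN_cont T g r J s t \<ge> J (t + 1) then 1 else 0)"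

definition SN_Jstep ::
  "nat \<Rightarrow> nat \<Rightarrow> (nat \<Rightarrow> nat \<Rightarrow> real) \<Rightarrow> (nat \<Rightarrow> real) \<Rightarrow> (nat \<Rightarrow> nat \<Rightarrow> real) \<Rightarrow> (nat \<Rightarrow> nat \<Rightarrow> real) \<Rightarrow> (nat \<Rightarrow> real) \<Rightarrow> nat \<Rightarrow> real" where
  "SN_Jstep S T lam g xv r J t =
     (1 - (\<Sum>s=1..S. lam s t)) * J (t + 1) +
     (\<Sum>s=1..S. lam s t * ((1 - SN_xt T g xv r J s t) * J (t + 1)
                          + SN_xt T g xv r J s t * SN_cont T g r J s t))"

text \<open>After n backward steps, values J t are filled for t = T-n+1..T; all other entries
  (in particular J (T+1)) are 0.\<close>
primrec SN_Jvec ::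
  "nat \<Rightarrow> nat \<Rightarrow> (nat \<Rightarrow> nat \<Rightarrow> real) \<Rightarrow> (nat \<Rightarrow> real) \<Rightarrow> (nat \<Rightarrow> nat \<Rightarrow> real) \<Rightarrow> (nat \<Rightarrow> nat \<Rightarrow> real) \<Rightarrow> nat \<Rightarrow> nat \<Rightarrow> real" where
  "SN_Jvec S T lam g xv r 0 = (\<lambda>_. 0)"
| "SN_Jvec S T lam g xv r (Suc n) =
     (let J = SN_Jvec S T lam g xv r n in J(T - n := SN_Jstep S T lam g xv r J (T - n)))"

definition SN_Jvol ::
  "nat \<Rightarrow> nat \<Rightarrow> (nat \<Rightarrow> nat \<Rightarrow> real) \<Rightarrow> (nat \<Rightarrow> real) \<Rightarrow> (nat \<Rightarrow> nat \<Rightarrow> real) \<Rightarrow> (nat \<Rightarrow> nat \<Rightarrow> real) \<Rightarrow> nat \<Rightarrow> real" where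
  "SN_Jvol S T lam g xv r = SN_Jvec S T lam g xv r T"

text \<open>SN_P k s t = \<Prod>_{u=1..k} (1 - xtilde_{u,s,t} p_{u,s}), computed volunteer by volunteer.\<close>
primrec SN_P ::
  "nat \<Rightarrow> nat \<Rightarrow> (nat \<Rightarrow> nat \<Rightarrow> real) \<Rightarrow> (nat \<Rightarrow> real) \<Rightarrow> (nat \<Rightarrow> nat \<Rightarrow> real) \<Rightarrow> (nat \<Rightarrow> nat \<Rightarrow> nat \<Rightarrow> real) \<Rightarrow> nat \<Rightarrow> nat \<Rightarrow> nat \<Rightarrow> real" where
  "SN_P S T lam g p x 0 = (\<lambda>s t. 1)"
| "SN_P S T lam g p x (Suc k) =
     (let r = (\<lambda>s t. p (Suc k) s * SN_P S T lam g p x k s t);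
          J = SN_Jvol S T lam g (x (Suc k)) r
      in (\<lambda>s t. SN_P S T lam g p x k s t * (1 - SN_xt T g (x (Suc k)) r J s t * p (Suc k) s)))"

definition SN_r ::
  "nat \<Rightarrow> nat \<Rightarrow> (nat \<Rightarrow> nat \<Rightarrow> real) \<Rightarrow> (nat \<Rightarrow> real) \<Rightarrow> (nat \<Rightarrow> nat \<Rightarrow> real) \<Rightarrow> (nat \<Rightarrow> nat \<Rightarrow> nat \<Rightarrow> real) \<Rightarrow> nat \<Rightarrow> nat \<Rightarrow> nat \<Rightarrow> real" where
  "SN_r S T lam g p x v s t = p v s * SN_P S T lam g p x (v - 1) s t"

definition SN_J ::
  "nat \<Rightarrow> nat \<Rightarrow> (nat \<Rightarrow> nat \<Rightarrow> real) \<Rightarrow> (nat \<Rightarrow> real) \<Rightarrow> (nat \<Rightarrow> nat \<Rightarrow> real) \<Rightarrow> (nat \<Rightarrow> nat \<Rightarrow> nat \<Rightarrow> real) \<Rightarrow> nat \<Rightarrow> nat \<Rightarrow> real" where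
  "SN_J S T lam g p x v = SN_Jvol S T lam g (x v) (SN_r S T lam g p x v)"

end

(*
  Write q = mdhr g, c = 1/(2 - q) and a_t = sum_s lam_{s,t} x_{v,s,t}. By the MDHR, survival
  probabilities decay by a factor 1 - q per period, so the load that period-t arrivals find
  already in place is at most (1 - q) times the load at t - 1, hence at most 1 - q; the weight
  A_t = 1 - c (load_t - a_t) is therefore at least c. The threshold rule accepts exactly the
  tasks with nonnegative gain r + continuation - J_{t+1}, so A_t (J_t - J_{t+1}) dominates c times
  the gain of accepting with the ex ante probability x. Summed over t, these inequalities
  telescope to J_1 >= c sum_{s,t} lam x r, and r_{v,s,t} >= p_{v,s} prod_{u<v} (1 - p_{u,s} x_{u,s,t})
  because the x-tilde only switch ex ante probabilities off.
*)
theory Submission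
  imports Defs
begin

lemma Gcdf_0 [simp]: "Gcdf g 0 = 0"
  by (simp add: Gcdf_def)

lemma Gcdf_Suc: "Gcdf g (Suc n) = Gcdf g n + g (Suc n)"
  by (simp add: Gcdf_def)

lemma Gcdf_le_1:
  assumes "\<forall>i. g i \<ge> 0" and "g sums 1"
  shows "Gcdf g k \<le> 1"
proof -
  have "Gcdf g k \<le> suminf g"
    unfolding Gcdf_def using assms by (intro sum_le_suminf) (auto simp: sums_iff)
  with \<open>g sums 1\<close> show ?thesis by (simp add: sums_iff)
qed

lemma hazard_nonneg:
  assumes "\<forall>i. g i \<ge> 0" and "g sums 1"
  shows "0 \<le> hazard g t"
  using Gcdf_le_1[OF assms, of "t - 1"] assms(1) unfolding hazard_def by auto

lemma mdhr_le_hazard: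
  assumes "\<forall>i. g i \<ge> 0" and "g sums 1" and "1 \<le> t"
  shows "mdhr g \<le> hazard g t"
  unfolding mdhr_def
  by (rule cINF_lower) (use hazard_nonneg[OF assms(1,2)] assms(3) in \<open>auto intro!: bdd_belowI2\<close>)

lemma mdhr_le_1:
  assumes "\<forall>i. g i \<ge> 0" and "g sums 1"
  shows "mdhr g \<le> 1"
proof -
  have "mdhr g \<le> hazard g 1"
    using mdhr_le_hazard[OF assms] by simp
  also have "\<dots> \<le> 1"
    using Gcdf_le_1[OF assms, of 1] unfolding hazard_def by (simp add: Gcdf_def)
  finally show ?thesis .
qed

lemma survival_Suc_le:
  assumes g_nonneg: "\<forall>i. g i \<ge> 0" and g_sums: "g sums 1"
  shows "1 - Gcdf g (Suc k) \<le> (1 - mdhr g) * (1 - Gcdf g k)"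
proof (cases "1 - Gcdf g k = 0")
  case True
  then show ?thesis using g_nonneg by (simp add: Gcdf_Suc)
next
  case False
  then have pos: "0 < 1 - Gcdf g k"
    using Gcdf_le_1[OF g_nonneg g_sums, of k] by simp
  have "mdhr g \<le> g (Suc k) / (1 - Gcdf g k)"
    using mdhr_le_hazard[OF g_nonneg g_sums, of "Suc k"] False unfolding hazard_def by simp
  then have "mdhr g * (1 - Gcdf g k) \<le> g (Suc k)"
    using pos by (simp add: pos_le_divide_eq)
  then show ?thesis by (simp add: Gcdf_Suc algebra_simps)
qed

(* Expected occupancy at t when tasks are accepted at rate a and last a g-distributed time;
   the constraints of the polytope read load <= 1. *)
definition load :: "(nat \<Rightarrow> real) \<Rightarrow> (nat \<Rightarrow> real) \<Rightarrow> nat \<Rightarrow> real" where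
  "load g a t = (\<Sum>u=1..t. a u * (1 - Gcdf g (t - u)))"

lemma load_0 [simp]: "load g a 0 = 0"
  by (simp add: load_def)

lemma load_Suc_eq_arrival: "load g a (Suc t) = (\<Sum>u=1..t. a u * (1 - Gcdf g (Suc t - u))) + a (Suc t)"
  by (simp add: load_def Gcdf_def)

lemma load_Suc: "load g a (Suc t) = load g a t + a (Suc t) - (\<Sum>u=1..t. a u * g (Suc t - u))"
proof -
  have "(\<Sum>u=1..t. a u * (1 - Gcdf g (Suc t - u)))
      = (\<Sum>u=1..t. a u * (1 - Gcdf g (t - u)) - a u * g (Suc t - u))"
  proof (rule sum.cong)
    fix u assume "u \<in> {1..t}"
    then have "Suc t - u = Suc (t - u)" by auto
    then show "a u * (1 - Gcdf g (Suc t - u)) = a u * (1 - Gcdf g (t - u)) - a u * g (Suc t - u)"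
      by (simp add: Gcdf_Suc algebra_simps)
  qed simp
  then show ?thesis
    by (simp add: load_Suc_eq_arrival load_def sum_subtractf)
qed

lemma load_Suc_minus_le:
  assumes "\<forall>i. g i \<ge> 0" and "g sums 1" and a_nonneg: "\<forall>u\<in>{1..t}. 0 \<le> a u"
  shows "load g a (Suc t) - a (Suc t) \<le> (1 - mdhr g) * load g a t"
proof -
  have "load g a (Suc t) - a (Suc t) = (\<Sum>u=1..t. a u * (1 - Gcdf g (Suc (t - u))))"
    by (simp add: load_Suc_eq_arrival Suc_diff_le)
  also have "\<dots> \<le> (\<Sum>u=1..t. a u * ((1 - mdhr g) * (1 - Gcdf g (t - u))))"
    using a_nonneg survival_Suc_le[OF assms(1,2)] by (intro sum_mono mult_left_mono) auto
  also have "\<dots> = (1 - mdhr g) * load g a t"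
    by (simp add: load_def sum_distrib_left algebra_simps)
  finally show ?thesis .
qed

lemma load_carried_le:
  assumes "\<forall>i. g i \<ge> 0" and "g sums 1" and "1 \<le> t"
    and a_nonneg: "\<forall>u\<in>{1..<t}. 0 \<le> a u" and load_le: "load g a (t - 1) \<le> 1"
  shows "load g a t - a t \<le> 1 - mdhr g"
proof -
  obtain t' where t': "t = Suc t'" using \<open>1 \<le> t\<close> by (cases t) auto
  have "load g a t - a t \<le> (1 - mdhr g) * load g a t'"
    unfolding t' using a_nonneg t' by (intro load_Suc_minus_le[OF assms(1,2)]) auto
  also have "\<dots> \<le> 1 - mdhr g"
    using mdhr_le_1[OF assms(1,2)] load_le t' by (simp add: mult_left_le)
  finally show ?thesis .
qed

lemma load_telescope:
  fixes a J :: "nat \<Rightarrow> real"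
  shows "(\<Sum>t=1..N. (1 - c * (load g a t - a t)) * (J t - J (t + 1))
            - c * a t * ((\<Sum>\<tau>=t+1..N. g (\<tau> - t) * J \<tau>) - J (t + 1)))
         = J 1 - (1 - c * load g a N) * J (N + 1)"
proof (induction N)
  case 0
  show ?case by simp
next
  case (Suc N)
  have tail: "(\<Sum>\<tau>=t+1..Suc N. g (\<tau> - t) * J \<tau>)
      = (\<Sum>\<tau>=t+1..N. g (\<tau> - t) * J \<tau>) + g (Suc N - t) * J (Suc N)" if "t \<le> N" for t
    using that by (simp add: sum.cl_ivl_Suc)
  have "(\<Sum>t=1..N. (1 - c * (load g a t - a t)) * (J t - J (t + 1))
            - c * a t * ((\<Sum>\<tau>=t+1..Suc N. g (\<tau> - t) * J \<tau>) - J (t + 1)))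
      = (\<Sum>t=1..N. ((1 - c * (load g a t - a t)) * (J t - J (t + 1))
            - c * a t * ((\<Sum>\<tau>=t+1..N. g (\<tau> - t) * J \<tau>) - J (t + 1)))
            - c * J (Suc N) * (a t * g (Suc N - t)))"
    by (intro sum.cong) (simp_all add: tail algebra_simps)
  also have "\<dots> = J 1 - (1 - c * load g a N) * J (N + 1)
                    - c * J (Suc N) * (\<Sum>t=1..N. a t * g (Suc N - t))"
    by (subst sum_subtractf) (simp only: Suc.IH sum_distrib_left)
  finally show ?case
    by (simp add: load_Suc algebra_simps)
qed

lemma SN_Jvec_stable:
  assumes "n \<le> m" and "T - n < \<tau>"
  shows "SN_Jvec S T lam g xv r m \<tau> = SN_Jvec S T lam g xv r n \<tau>"
  using assms
proof (induction m)
  case 0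
  then show ?case by simp
next
  case (Suc m)
  show ?case
  proof (cases "n = Suc m")
    case False
    with Suc.prems have "n \<le> m" and "\<tau> \<noteq> T - m" by auto
    with Suc.IH Suc.prems(2) show ?thesis by (simp add: Let_def)
  qed simp
qed

lemma SN_Jvol_beyond: "SN_Jvol S T lam g xv r (T + 1) = 0"
proof -
  have "SN_Jvec S T lam g xv r m (T + 1) = 0" for m
    by (induction m) (auto simp: Let_def)
  then show ?thesis by (simp add: SN_Jvol_def)
qed

lemma SN_Jstep_cong:
  assumes "\<And>\<tau>. t < \<tau> \<Longrightarrow> J \<tau> = J' \<tau>"
  shows "SN_Jstep S T lam g xv r J t = SN_Jstep S T lam g xv r J' t"
proof -
  have cont: "SN_cont T g r J s t = SN_cont T g r J' s t" for s
    unfolding SN_cont_def using assms by (auto intro!: sum.cong)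
  then have "SN_xt T g xv r J s t = SN_xt T g xv r J' s t" for s
    unfolding SN_xt_def using assms[of "t + 1"] by simp
  with cont show ?thesis
    unfolding SN_Jstep_def using assms[of "t + 1"] by simp
qed

lemma SN_Jvol_fixpoint:
  assumes "t \<in> {1..T}"
  shows "SN_Jvol S T lam g xv r t = SN_Jstep S T lam g xv r (SN_Jvol S T lam g xv r) t"
proof -
  define n where "n = T - t"
  have n: "n < T" "T - n = t" using assms by (auto simp: n_def)
  have "SN_Jvol S T lam g xv r t = SN_Jvec S T lam g xv r (Suc n) t"
    unfolding SN_Jvol_def using n by (intro SN_Jvec_stable) auto
  also have "\<dots> = SN_Jstep S T lam g xv r (SN_Jvec S T lam g xv r n) t"
    using n by (simp add: Let_def)
  also have "\<dots> = SN_Jstep S T lam g xv r (SN_Jvol S T lam g xv r) t"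
    unfolding SN_Jvol_def using n by (intro SN_Jstep_cong SN_Jvec_stable[symmetric]) auto
  finally show ?thesis .
qed

lemma SN_Jstep_eq:
  "SN_Jstep S T lam g xv r J t = J (t + 1) +
     (\<Sum>s=1..S. lam s t * SN_xt T g xv r J s t * (SN_cont T g r J s t - J (t + 1)))"
proof -
  have "(\<Sum>s=1..S. lam s t * ((1 - SN_xt T g xv r J s t) * J (t + 1) + SN_xt T g xv r J s t * SN_cont T g r J s t))
     = (\<Sum>s=1..S. lam s t * J (t + 1) + lam s t * SN_xt T g xv r J s t * (SN_cont T g r J s t - J (t + 1)))"
    by (rule sum.cong) (simp_all add: algebra_simps)
  also have "\<dots> = (\<Sum>s=1..S. lam s t) * J (t + 1)
      + (\<Sum>s=1..S. lam s t * SN_xt T g xv r J s t * (SN_cont T g r J s t - J (t + 1)))"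
    by (simp only: sum.distrib sum_distrib_right)
  finally show ?thesis
    unfolding SN_Jstep_def by (simp add: algebra_simps)
qed

lemma SN_xt_gain_nonneg:
  assumes "0 \<le> xv s t"
  shows "0 \<le> SN_xt T g xv r J s t * (SN_cont T g r J s t - J (t + 1))"
  using assms by (simp add: SN_xt_def)

lemma SN_xt_gain_ge:
  assumes "0 \<le> xv s t"
  shows "xv s t * (SN_cont T g r J s t - J (t + 1)) \<le> SN_xt T g xv r J s t * (SN_cont T g r J s t - J (t + 1))"
  using assms by (simp add: SN_xt_def mult_nonneg_nonpos)

lemma SN_Jvol_increment_ge:
  fixes S T :: nat and lam r xv :: "nat \<Rightarrow> nat \<Rightarrow> real" and g :: "nat \<Rightarrow> real"
  defines "J \<equiv> SN_Jvol S T lam g xv r"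
  assumes t: "t \<in> {1..T}" and c: "0 \<le> c" "c \<le> A"
    and nonneg: "\<And>s. s \<in> {1..S} \<Longrightarrow> 0 \<le> lam s t \<and> 0 \<le> xv s t"
  shows "c * (\<Sum>s=1..S. lam s t * xv s t * (SN_cont T g r J s t - J (t + 1))) \<le> A * (J t - J (t + 1))"
proof -
  have "c * (\<Sum>s=1..S. lam s t * xv s t * (SN_cont T g r J s t - J (t + 1)))
      \<le> A * (\<Sum>s=1..S. lam s t * (SN_xt T g xv r J s t * (SN_cont T g r J s t - J (t + 1))))"
    unfolding sum_distrib_left
  proof (rule sum_mono)
    fix s assume "s \<in> {1..S}"
    with nonneg have lam: "0 \<le> lam s t" and xv: "0 \<le> xv s t" by auto
    let ?gain = "SN_xt T g xv r J s t * (SN_cont T g r J s t - J (t + 1))"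
    have "c * (lam s t * xv s t * (SN_cont T g r J s t - J (t + 1))) \<le> c * (lam s t * ?gain)"
      using SN_xt_gain_ge[of xv s t, OF xv] lam c(1) by (simp add: mult.assoc mult_left_mono)
    also have "\<dots> \<le> A * (lam s t * ?gain)"
      using SN_xt_gain_nonneg[of xv s t, OF xv] lam c(2) by (simp add: mult_right_mono)
    finally show "c * (lam s t * xv s t * (SN_cont T g r J s t - J (t + 1))) \<le> A * (lam s t * ?gain)" .
  qed
  also have "\<dots> = A * (J t - J (t + 1))"
    using SN_Jvol_fixpoint[OF t] unfolding J_def SN_Jstep_eq by (simp add: mult.assoc)
  finally show ?thesis .
qed

lemma SN_Jvol_ge_reward:
  assumes lam_nonneg: "\<forall>s\<in>{1..S}. \<forall>t\<in>{1..T}. 0 \<le> lam s t"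
    and xv_nonneg: "\<forall>s\<in>{1..S}. \<forall>t\<in>{1..T}. 0 \<le> xv s t"
    and load_le: "\<forall>t\<in>{1..T}. load g (\<lambda>\<tau>. \<Sum>s=1..S. lam s \<tau> * xv s \<tau>) t \<le> 1"
    and g_nonneg: "\<forall>i. g i \<ge> 0" and g_sums: "g sums 1"
  shows "(\<Sum>t=1..T. \<Sum>s=1..S. lam s t * xv s t * r s t) / (2 - mdhr g) \<le> SN_Jvol S T lam g xv r 1"
proof -
  define c where "c = 1 / (2 - mdhr g)"
  define a where "a = (\<lambda>\<tau>. \<Sum>s=1..S. lam s \<tau> * xv s \<tau>)"
  define J where "J = SN_Jvol S T lam g xv r"
  define A where "A t = 1 - c * (load g a t - a t)" for t
  have c: "0 < c" "c * (2 - mdhr g) = 1"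
    using mdhr_le_1[OF g_nonneg g_sums] by (auto simp: c_def)
  have a_nonneg: "0 \<le> a \<tau>" if "\<tau> \<in> {1..T}" for \<tau>
    unfolding a_def using lam_nonneg xv_nonneg that by (auto intro!: sum_nonneg)
  have A_ge: "c \<le> A t" if t: "t \<in> {1..T}" for t
  proof -
    have "load g a (t - 1) \<le> 1"
    proof (cases "t = 1")
      case False
      with t have "t - 1 \<in> {1..T}" by auto
      with load_le[folded a_def] show ?thesis by blast
    qed simp
    then have "load g a t - a t \<le> 1 - mdhr g"
      using t a_nonneg by (intro load_carried_le[OF g_nonneg g_sums]) auto
    then have "c * (load g a t - a t) \<le> c * (1 - mdhr g)"
      using c(1) by (simp add: mult_left_mono)
    with c(2) show ?thesis by (simp add: A_def algebra_simps)
  qed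
  have gain: "c * (\<Sum>s=1..S. lam s t * xv s t * r s t)
      \<le> A t * (J t - J (t + 1)) - c * a t * ((\<Sum>\<tau>=t+1..T. g (\<tau> - t) * J \<tau>) - J (t + 1))"
    if t: "t \<in> {1..T}" for t
  proof -
    have split: "(\<Sum>s=1..S. lam s t * xv s t * (SN_cont T g r J s t - J (t + 1)))
        = (\<Sum>s=1..S. lam s t * xv s t * r s t) + a t * ((\<Sum>\<tau>=t+1..T. g (\<tau> - t) * J \<tau>) - J (t + 1))"
      unfolding SN_cont_def a_def sum_distrib_right sum.distrib[symmetric]
      by (rule sum.cong) (simp_all add: algebra_simps)
    have "c * (\<Sum>s=1..S. lam s t * xv s t * (SN_cont T g r J s t - J (t + 1))) \<le> A t * (J t - J (t + 1))"
      using SN_Jvol_increment_ge[OF t, where c=c and A="A t"] lam_nonneg xv_nonneg t c(1) A_ge[OF t]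
      unfolding J_def by simp
    then show ?thesis
      unfolding split by (simp only: distrib_left mult.assoc)
  qed
  have "c * (\<Sum>t=1..T. \<Sum>s=1..S. lam s t * xv s t * r s t)
      = (\<Sum>t=1..T. c * (\<Sum>s=1..S. lam s t * xv s t * r s t))"
    by (rule sum_distrib_left)
  also have "\<dots> \<le> (\<Sum>t=1..T. A t * (J t - J (t + 1)) - c * a t * ((\<Sum>\<tau>=t+1..T. g (\<tau> - t) * J \<tau>) - J (t + 1)))"
    using gain by (rule sum_mono)
  also have "\<dots> = J 1"
    using load_telescope[where c=c and g=g and a=a and N=T and J=J] SN_Jvol_beyond unfolding A_def J_def by simp
  finally show ?thesis by (simp add: c_def J_def)
qed

lemma prod_le_SN_P:
  assumes "\<forall>u\<in>{1..k}. 0 \<le> p u s \<and> p u s \<le> 1 \<and> 0 \<le> x u s t \<and> x u s t \<le> 1"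
  shows "(\<Prod>u=1..k. 1 - p u s * x u s t) \<le> SN_P S T lam g p x k s t"
  using assms
proof (induction k)
  case 0
  then show ?case by simp
next
  case (Suc k)
  then have px: "0 \<le> p u s" "p u s * x u s t \<le> 1" if "u \<in> {1..Suc k}" for u
    using that by (auto intro: mult_le_one)
  define R where "R = (\<lambda>s t. p (Suc k) s * SN_P S T lam g p x k s t)"
  define X where "X = SN_xt T g (x (Suc k)) R (SN_Jvol S T lam g (x (Suc k)) R) s t"
  have "1 - p (Suc k) s * x (Suc k) s t \<le> 1 - X * p (Suc k) s"
    using Suc.prems by (simp add: X_def SN_xt_def)
  moreover have "0 \<le> (\<Prod>u=1..k. 1 - p u s * x u s t)"
    using px by (auto intro!: prod_nonneg)
  moreover have "0 \<le> 1 - p (Suc k) s * x (Suc k) s t"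
    using px[of "Suc k"] by simp
  ultimately have "(\<Prod>u=1..k. 1 - p u s * x u s t) * (1 - p (Suc k) s * x (Suc k) s t)
      \<le> SN_P S T lam g p x k s t * (1 - X * p (Suc k) s)"
    using Suc by (intro mult_mono) auto
  then show ?case
    by (simp add: Let_def R_def X_def)
qed

lemma prod_le_SN_r:
  assumes "1 \<le> v" and "0 \<le> p v s"
    and "\<forall>u\<in>{1..<v}. 0 \<le> p u s \<and> p u s \<le> 1 \<and> 0 \<le> x u s t \<and> x u s t \<le> 1"
  shows "p v s * (\<Prod>u=1..<v. 1 - p u s * x u s t) \<le> SN_r S T lam g p x v s t"
proof -
  have "{1..<v} = {1..v - 1}" using \<open>1 \<le> v\<close> by auto
  with assms(3) have "(\<Prod>u=1..<v. 1 - p u s * x u s t) \<le> SN_P S T lam g p x (v - 1) s t"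
    using prod_le_SN_P[of "v - 1" p s x t S T lam g] by simp
  from this \<open>0 \<le> p v s\<close> show ?thesis
    unfolding SN_r_def by (rule mult_left_mono)
qed

lemma f_obj_le_SN_reward:
  assumes v: "v \<in> {1..V}" and lam_nonneg: "\<forall>s\<in>{1..S}. \<forall>t\<in>{1..T}. 0 \<le> lam s t"
    and p_range: "\<forall>u\<in>{1..V}. \<forall>s\<in>{1..S}. 0 \<le> p u s \<and> p u s \<le> 1"
    and x_range: "\<forall>u\<in>{1..V}. \<forall>s\<in>{1..S}. \<forall>t\<in>{1..T}. 0 \<le> x u s t \<and> x u s t \<le> 1"
  shows "f_obj S T lam p x v \<le> (\<Sum>t=1..T. \<Sum>s=1..S. lam s t * x v s t * SN_r S T lam g p x v s t)"
  unfolding f_obj_def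
proof (intro sum_mono)
  fix t s assume t: "t \<in> {1..T}" and s: "s \<in> {1..S}"
  have "p v s * (\<Prod>u=1..<v. 1 - p u s * x u s t) \<le> SN_r S T lam g p x v s t"
    using v s t p_range x_range by (intro prod_le_SN_r) auto
  moreover have "0 \<le> lam s t * x v s t"
    using v s t x_range lam_nonneg by simp
  ultimately have "lam s t * x v s t * (p v s * (\<Prod>u=1..<v. 1 - p u s * x u s t))
      \<le> lam s t * x v s t * SN_r S T lam g p x v s t"
    by (rule mult_left_mono)
  then show "lam s t * (\<Prod>u=1..<v. 1 - p u s * x u s t) * p v s * x v s t
      \<le> lam s t * x v s t * SN_r S T lam g p x v s t"
    by (simp only: ac_simps)
qed

theorem lemma3:
  fixes V S T :: nat
    and lam :: "nat \<Rightarrow> nat \<Rightarrow> real"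
    and p :: "nat \<Rightarrow> nat \<Rightarrow> real"
    and g :: "nat \<Rightarrow> real"
    and x :: "nat \<Rightarrow> nat \<Rightarrow> nat \<Rightarrow> real"
  assumes lam_nonneg: "\<forall>s\<in>{1..S}. \<forall>t\<in>{1..T}. lam s t \<ge> 0"
    and lam_sum: "\<forall>t\<in>{1..T}. (\<Sum>s=1..S. lam s t) \<le> 1"
    and p_range: "\<forall>v\<in>{1..V}. \<forall>s\<in>{1..S}. 0 \<le> p v s \<and> p v s \<le> 1"
    and g_nonneg: "\<forall>i. g i \<ge> 0"
    and g_zero: "g 0 = 0"
    and g_sums: "g sums 1"
    and x_in: "in_polytope V S T lam g x"
  shows "\<forall>v\<in>{1..V}. SN_J S T lam g p x v 1 \<ge> (1 / (2 - mdhr g)) * f_obj S T lam p x v"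
proof
  fix v assume v: "v \<in> {1..V}"
  have x_range: "\<forall>u\<in>{1..V}. \<forall>s\<in>{1..S}. \<forall>t\<in>{1..T}. 0 \<le> x u s t \<and> x u s t \<le> 1"
    using x_in unfolding in_polytope_def by blast
  have load_le: "\<forall>t\<in>{1..T}. load g (\<lambda>\<tau>. \<Sum>s=1..S. lam s \<tau> * x v s \<tau>) t \<le> 1"
    using x_in v unfolding in_polytope_def load_def by (simp add: sum_distrib_right)
  define R where "R = (\<Sum>t=1..T. \<Sum>s=1..S. lam s t * x v s t * SN_r S T lam g p x v s t)"
  have "f_obj S T lam p x v \<le> R"
    unfolding R_def using v lam_nonneg p_range x_range by (rule f_obj_le_SN_reward)
  moreover have "0 < 2 - mdhr g"
    using mdhr_le_1[OF g_nonneg g_sums] by simp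
  ultimately have "f_obj S T lam p x v / (2 - mdhr g) \<le> R / (2 - mdhr g)"
    by (simp add: divide_right_mono)
  also have "\<dots> \<le> SN_J S T lam g p x v 1"
    unfolding SN_J_def R_def using v lam_nonneg x_range load_le g_nonneg g_sums
    by (intro SN_Jvol_ge_reward) auto
  finally show "SN_J S T lam g p x v 1 \<ge> (1 / (2 - mdhr g)) * f_obj S T lam p x v"
    by simp
qed

end
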